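(* Let $n\ge2$ and $x=(x_1,\dots,x_n)\in\mathbb R^n$ with $x_i\ne0$ for all $i$ and $x_1+\dots+x_n=0$. Then $$\sum_{\substack{\sigma\in S_n\\ \pi_\sigma(x)\text{ allowed}}}G_n(\pi_\sigma(x))=0.$$
   Context: $S_n$ is the symmetric group on $\{1,\dots,n\}$, $\pi_\sigma(x)=(x_{\sigma(1)},\dots,x_{\sigma(n)})$. For $y\in\mathbb R^n$, $D_i(y)=y_1+\dots+y_i$; $y$ is called allowed if $D_i(y)\ne0$ for all $i=1,\dots,n-1$, and then $G_n(y)=\prod_{i=1}^{n-1}D_i(y)^{-1}$. *)

theory Defs
  imports Complex_Main "HOL-Combinatorics.Permutations"
begin

text \<open>Vectors y in R^n are represented as functions nat => real, using the entries y 1, ..., y n.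
  Permutations sigma in S_n are functions with sigma permutes {1..n}.\<close>

definition perm_vec :: "(nat \<Rightarrow> nat) \<Rightarrow> (nat \<Rightarrow> real) \<Rightarrow> (nat \<Rightarrow> real)" where
  "perm_vec \<sigma> x = (\<lambda>i. x (\<sigma> i))"

definition partial_sum :: "(nat \<Rightarrow> real) \<Rightarrow> nat \<Rightarrow> real" where
  "partial_sum y i = (\<Sum>j=1..i. y j)"

definition allowed :: "nat \<Rightarrow> (nat \<Rightarrow> real) \<Rightarrow> bool" where
  "allowed n y \<longleftrightarrow> (\<forall>i\<in>{1..n-1}. partial_sum y i \<noteq> 0)"

definition G :: "nat \<Rightarrow> (nat \<Rightarrow> real) \<Rightarrow> real" where
  "G n y = (\<Prod>i=1..n-1. inverse (partial_sum y i))"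

end

theory Submission
  imports Defs "HOL-Combinatorics.Multiset_Permutations"
begin

text \<open>
  Proof by induction on the number of entries, in the stronger form that the sum of G over all
  orderings of a set of nonzero numbers vanishes whenever that set sums to zero. Remove one
  entry y; the remaining entries, in some order, have prefix sums u(0) = 0, ..., u(k) = -y.
  Inserting y at position p gives the term (1/u(1)\<cdots>1/u(p))\<cdot>(1/(u(p)+y)\<cdots>1/(u(k-1)+y)),
  and the partial fraction identity y/(u(u+y)) = 1/u - 1/(u+y) makes the sum over all p
  telescope. What survives are the positions where u(p) = 0 or u(p) = -y, i.e. where the first
  p or the last k - p remaining entries sum to zero; there the term factorises with a factor G
  of that proper zero-sum block. Summing over all orderings, the block runs through all
  orderings of a proper zero-sum subset, so these contributions vanish by induction.
\<close>

lemma partial_fraction_inverse: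
  fixes u y :: real
  assumes "y \<noteq> 0"
  shows "y * inverse u * inverse (u + y)
       = inverse u - inverse (u + y) + (if u = 0 \<or> u = - y then inverse y else 0)"
proof (cases "u = 0 \<or> u = - y")
  case True
  then show ?thesis using assms by auto
next
  case False
  then have "u + y \<noteq> 0" by linarith
  with False assms show ?thesis by (simp add: field_simps)
qed

lemma telescoping_insertion_step:
  fixes u :: "nat \<Rightarrow> real"
  assumes y: "y \<noteq> 0" and p: "1 \<le> p" "p < k"
  shows "y * ((\<Prod>i\<in>{1..p}. inverse (u i)) * (\<Prod>i\<in>{p..<k}. inverse (u i + y)))
       = (\<Prod>i\<in>{1..p}. inverse (u i)) * (\<Prod>i\<in>{p<..<k}. inverse (u i + y))
       - (\<Prod>i\<in>{1..<p}. inverse (u i)) * (\<Prod>i\<in>{p..<k}. inverse (u i + y))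
       + (if u p = 0 \<or> u p = - y
          then (\<Prod>i\<in>{1..<p}. inverse (u i)) * (\<Prod>i\<in>{p<..<k}. inverse (u i + y)) / y else 0)"
proof -
  define P where "P = (\<Prod>i\<in>{1..<p}. inverse (u i))"
  define Q where "Q = (\<Prod>i\<in>{p<..<k}. inverse (u i + y))"
  have left: "(\<Prod>i\<in>{1..p}. inverse (u i)) = P * inverse (u p)"
    unfolding P_def using p
    by (simp add: atLeastLessThanSuc_atLeastAtMost[symmetric] prod.atLeastLessThan_Suc)
  have right: "(\<Prod>i\<in>{p..<k}. inverse (u i + y)) = inverse (u p + y) * Q"
    unfolding Q_def using p
    by (simp add: prod.atLeast_Suc_lessThan atLeastSucLessThan_greaterThanLessThan)
  have "y * (P * inverse (u p) * (inverse (u p + y) * Q))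
      = P * Q * (y * inverse (u p) * inverse (u p + y))"
    by (simp add: algebra_simps)
  also have "\<dots> = P * Q * (inverse (u p) - inverse (u p + y)
                           + (if u p = 0 \<or> u p = - y then inverse y else 0))"
    using partial_fraction_inverse[OF y] by simp
  finally show ?thesis
    unfolding left right P_def[symmetric] Q_def[symmetric]
    by (simp add: algebra_simps divide_inverse)
qed

lemma telescoping_insertion_sum:
  fixes u :: "nat \<Rightarrow> real"
  assumes y: "y \<noteq> 0" and k: "1 \<le> k" and u0: "u 0 = 0" and uk: "u k = - y"
  shows "y\<^sup>2 * (\<Sum>p\<in>{0..k}. (\<Prod>i\<in>{1..p}. inverse (u i)) * (\<Prod>i\<in>{p..<k}. inverse (u i + y)))
       = (\<Sum>p\<in>{1..<k}. if u p = 0 \<or> u p = - y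
            then (\<Prod>i\<in>{1..<p}. inverse (u i)) * (\<Prod>i\<in>{p<..<k}. inverse (u i + y)) else 0)"
proof -
  define T where "T p = (\<Prod>i\<in>{1..p}. inverse (u i)) * (\<Prod>i\<in>{p..<k}. inverse (u i + y))" for p
  define A where "A p = (\<Prod>i\<in>{1..p}. inverse (u i)) * (\<Prod>i\<in>{p<..<k}. inverse (u i + y))" for p
  define C where "C p = (if u p = 0 \<or> u p = - y
            then (\<Prod>i\<in>{1..<p}. inverse (u i)) * (\<Prod>i\<in>{p<..<k}. inverse (u i + y)) else 0)" for p
  have A_pred: "A (p - 1) = (\<Prod>i\<in>{1..<p}. inverse (u i)) * (\<Prod>i\<in>{p..<k}. inverse (u i + y))"
    if "1 \<le> p" for p
  proof -
    have "{1..p - 1} = {1..<p}" "{p - 1<..<k} = {p..<k}" using that by auto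
    then show ?thesis unfolding A_def by simp
  qed
  have step: "y * T p = A p - A (p - 1) + C p / y" if "1 \<le> p" "p < k" for p
    unfolding T_def A_pred[OF that(1)] unfolding A_def C_def
    using telescoping_insertion_step[OF y that] by simp
  have T0: "y * T 0 = A 0"
  proof -
    have "{0..<k} = insert 0 {0<..<k}" using k by auto
    then show ?thesis unfolding T_def A_def using u0 y by simp
  qed
  have Tk: "y * T k = - A (k - 1)"
  proof -
    have "(\<Prod>i\<in>{1..k}. inverse (u i)) = (\<Prod>i\<in>{1..<k}. inverse (u i)) * inverse (- y)"
      using k uk by (simp add: atLeastLessThanSuc_atLeastAtMost[symmetric] prod.atLeastLessThan_Suc)
    then show ?thesis unfolding T_def A_pred[OF k] using y by simp
  qed
  have "{1..<k} = {Suc 0..k - 1}" using k by auto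
  then have "(\<Sum>p\<in>{1..<k}. A p - A (p - 1)) = A (k - 1) - A 0"
    using sum_telescope''[of 0 "k - 1" A] k by simp
  moreover have "(\<Sum>p\<in>{1..<k}. y * T p) = (\<Sum>p\<in>{1..<k}. A p - A (p - 1)) + (\<Sum>p\<in>{1..<k}. C p) / y"
    using step by (simp add: sum.distrib sum_divide_distrib)
  moreover have "y * (\<Sum>p\<in>{0..k}. T p) = y * T 0 + y * T k + (\<Sum>p\<in>{1..<k}. y * T p)"
  proof -
    have "{0..k} = insert 0 (insert k {1..<k})" using k by auto
    then show ?thesis using k by (simp add: sum_distrib_left algebra_simps)
  qed
  ultimately have "y * (\<Sum>p\<in>{0..k}. T p) = (\<Sum>p\<in>{1..<k}. C p) / y"
    using T0 Tk by simp
  then show ?thesis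
    unfolding T_def[symmetric] C_def[symmetric] using y by (simp add: power2_eq_square field_simps)
qed

text \<open>Since \<open>inverse 0 = 0\<close>, \<open>G_list\<close> vanishes on sequences that are not allowed.\<close>

definition G_list :: "real list \<Rightarrow> real" where
  "G_list ys = (\<Prod>i\<in>{1..<length ys}. inverse (sum_list (take i ys)))"

definition G_zero_sum :: "real list \<Rightarrow> real" where
  "G_zero_sum ys = (if sum_list ys = 0 then G_list ys else 0)"

lemma prod_prefix_sums_shift:
  fixes zs :: "real list"
  shows "(\<Prod>i\<in>{q<..<length zs}. inverse (sum_list (take i zs) + c))
       = (\<Prod>j\<in>{1..<length zs - q}. inverse (sum_list (take q zs) + c + sum_list (take j (drop q zs))))"
proof -
  have split: "sum_list (take (j + q) zs) = sum_list (take q zs) + sum_list (take j (drop q zs))"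
    for j
    by (simp only: add.commute[of j q] take_add sum_list_append)
  then have "sum_list (take q zs) + sum_list (take (i - q) (drop q zs)) = sum_list (take i zs)"
    if "q < i" for i
    using that by (metis le_add_diff_inverse2 less_imp_le)
  with split show ?thesis
    by (intro prod.reindex_bij_witness[of _ "\<lambda>j. j + q" "\<lambda>i. i - q"]) auto
qed

lemma G_list_take:
  "p \<le> length zs \<Longrightarrow> G_list (take p zs) = (\<Prod>i\<in>{1..<p}. inverse (sum_list (take i zs)))"
  unfolding G_list_def by (intro prod.cong) (auto simp: min_def)

lemma G_list_take_snoc:
  "p \<le> length zs \<Longrightarrow> G_list (take p zs @ [y]) = (\<Prod>i\<in>{1..p}. inverse (sum_list (take i zs)))"
  unfolding G_list_def by (intro prod.cong) (auto simp: min_def)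

lemma G_list_drop:
  "G_list (drop p zs) = (\<Prod>i\<in>{p<..<length zs}. inverse (sum_list (take i zs) - sum_list (take p zs)))"
  unfolding G_list_def using prod_prefix_sums_shift[where q = p and c = "- sum_list (take p zs)"] by simp

lemma G_list_Cons_drop:
  assumes "p < length zs"
  shows "G_list (y # drop p zs)
       = inverse y * (\<Prod>i\<in>{p<..<length zs}. inverse (sum_list (take i zs) + (y - sum_list (take p zs))))"
proof -
  have "G_list (y # drop p zs)
      = (\<Prod>j\<in>{1..<Suc (length zs - p)}. inverse (sum_list (take j (y # drop p zs))))"
    unfolding G_list_def using assms by simp
  also have "\<dots> = inverse y
      * (\<Prod>j\<in>{Suc 1..<Suc (length zs - p)}. inverse (sum_list (take j (y # drop p zs))))"
    using assms by (subst prod.atLeast_Suc_lessThan) auto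
  also have "\<dots> = inverse y * (\<Prod>j\<in>{1..<length zs - p}. inverse (y + sum_list (take j (drop p zs))))"
    by (subst prod.shift_bounds_Suc_ivl) simp
  also have "\<dots> = inverse y
      * (\<Prod>i\<in>{p<..<length zs}. inverse (sum_list (take i zs) + (y - sum_list (take p zs))))"
    using prod_prefix_sums_shift[where q = p and c = "y - sum_list (take p zs)"] by simp
  finally show ?thesis .
qed

lemma G_list_insert:
  assumes p: "p \<le> length zs"
  shows "G_list (take p zs @ y # drop p zs)
       = (\<Prod>i\<in>{1..p}. inverse (sum_list (take i zs)))
         * (\<Prod>i\<in>{p..<length zs}. inverse (sum_list (take i zs) + y))"
proof -
  let ?w = "take p zs @ y # drop p zs"
  have "G_list ?w = (\<Prod>i\<in>{1..<Suc (length zs)}. inverse (sum_list (take i ?w)))"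
    unfolding G_list_def using p by simp
  also have "\<dots> = (\<Prod>i\<in>{1..<Suc p}. inverse (sum_list (take i ?w)))
                  * (\<Prod>i\<in>{Suc p..<Suc (length zs)}. inverse (sum_list (take i ?w)))"
    using p by (subst prod.atLeastLessThan_concat) auto
  also have "(\<Prod>i\<in>{1..<Suc p}. inverse (sum_list (take i ?w)))
           = (\<Prod>i\<in>{1..p}. inverse (sum_list (take i zs)))"
    using p by (intro prod.cong) (auto simp: min_def)
  also have "(\<Prod>i\<in>{Suc p..<Suc (length zs)}. inverse (sum_list (take i ?w)))
           = (\<Prod>i\<in>{p..<length zs}. inverse (sum_list (take i zs) + y))"
  proof (subst prod.shift_bounds_Suc_ivl, intro prod.cong refl)
    fix i assume i: "i \<in> {p..<length zs}"
    then have "take (Suc i) ?w = take p zs @ y # take (i - p) (drop p zs)"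
      using p by (simp add: min_def Suc_diff_le)
    moreover have "take i zs = take p zs @ take (i - p) (drop p zs)"
      using i take_add[of p "i - p" zs] by simp
    ultimately show "inverse (sum_list (take (Suc i) ?w)) = inverse (sum_list (take i zs) + y)"
      by simp
  qed
  finally show ?thesis .
qed

lemma G_list_insertion_sum:
  fixes zs :: "real list"
  assumes y: "y \<noteq> 0" and k: "1 \<le> length zs" and s: "sum_list zs = - y"
  shows "y\<^sup>2 * (\<Sum>p\<in>{0..length zs}. G_list (take p zs @ y # drop p zs))
       = (\<Sum>p\<in>{1..<length zs}. G_zero_sum (take p zs) * (y * G_list (y # drop p zs))
                                - y * G_list (take p zs @ [y]) * G_zero_sum (drop p zs))"
proof -
  let ?k = "length zs"
  let ?u = "\<lambda>i. sum_list (take i zs)"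
  have "y\<^sup>2 * (\<Sum>p\<in>{0..?k}. G_list (take p zs @ y # drop p zs))
      = (\<Sum>p\<in>{1..<?k}. if ?u p = 0 \<or> ?u p = - y
           then (\<Prod>i\<in>{1..<p}. inverse (?u i)) * (\<Prod>i\<in>{p<..<?k}. inverse (?u i + y)) else 0)"
    using telescoping_insertion_sum[of y ?k ?u] y k s by (simp add: G_list_insert)
  also have "\<dots> = (\<Sum>p\<in>{1..<?k}. G_zero_sum (take p zs) * (y * G_list (y # drop p zs))
                                - y * G_list (take p zs @ [y]) * G_zero_sum (drop p zs))"
  proof (intro sum.cong refl)
    fix p assume p: "p \<in> {1..<?k}"
    have suffix: "sum_list (drop p zs) = - y - ?u p"
      using s by (metis append_take_drop_id sum_list_append add_diff_cancel_left')
    consider "?u p = 0" | "?u p = - y" | "?u p \<noteq> 0" "?u p \<noteq> - y" by blast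
    then show "(if ?u p = 0 \<or> ?u p = - y
           then (\<Prod>i\<in>{1..<p}. inverse (?u i)) * (\<Prod>i\<in>{p<..<?k}. inverse (?u i + y)) else 0)
        = G_zero_sum (take p zs) * (y * G_list (y # drop p zs))
          - y * G_list (take p zs @ [y]) * G_zero_sum (drop p zs)"
    proof cases
      case 1
      then show ?thesis
        using p y suffix by (simp add: G_zero_sum_def G_list_take G_list_Cons_drop)
    next
      case 2
      have "G_list (take p zs @ [y]) = (\<Prod>i\<in>{1..<p}. inverse (?u i)) * inverse (- y)"
        using p 2 by (simp add: G_list_take_snoc atLeastLessThanSuc_atLeastAtMost[symmetric]
            prod.atLeastLessThan_Suc)
      then show ?thesis
        using p y 2 suffix by (simp add: G_zero_sum_def G_list_drop)
    next
      case 3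
      then show ?thesis using suffix by (simp add: G_zero_sum_def)
    qed
  qed
  finally show ?thesis .
qed

lemma sum_permutations_of_set_split:
  assumes T: "finite T" and p: "p \<le> card T"
  shows "(\<Sum>L\<in>permutations_of_set T. h (take p L) (drop p L))
       = (\<Sum>A | A \<subseteq> T \<and> card A = p.
            \<Sum>\<alpha>\<in>permutations_of_set A. \<Sum>\<beta>\<in>permutations_of_set (T - A). h \<alpha> \<beta>)"
proof -
  let ?I = "{A. A \<subseteq> T \<and> card A = p}"
  let ?S = "Sigma ?I (\<lambda>A. permutations_of_set A \<times> permutations_of_set (T - A))"
  let ?split = "\<lambda>L. (set (take p L), take p L, drop p L)"
  have bij: "bij_betw ?split (permutations_of_set T) ?S"
  proof (rule bij_betwI[where g = "\<lambda>(A, \<alpha>, \<beta>). \<alpha> @ \<beta>"])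
    show "?split \<in> permutations_of_set T \<rightarrow> ?S"
    proof
      fix L assume "L \<in> permutations_of_set T"
      then have d: "distinct L" and s: "set L = T" by (auto simp: permutations_of_set_def)
      have "length L = card T" using d s distinct_card by fastforce
      then have "card (set (take p L)) = p" using d p by (simp add: distinct_card)
      moreover have "set (take p L) \<union> set (drop p L) = T" "set (take p L) \<inter> set (drop p L) = {}"
        using d s by (metis append_take_drop_id set_append, metis append_take_drop_id distinct_append)
      then have "set (drop p L) = T - set (take p L)" by blast
      moreover have "set (take p L) \<subseteq> T" using s by (auto dest: in_set_takeD)
      ultimately show "?split L \<in> ?S"
        using d by (simp add: permutations_of_set_def)
    qed
    show "(\<lambda>(A, \<alpha>, \<beta>). \<alpha> @ \<beta>) \<in> ?S \<rightarrow> permutations_of_set T"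
      by (force simp: permutations_of_set_def)
    show "(\<lambda>(A, \<alpha>, \<beta>). \<alpha> @ \<beta>) (?split L) = L" for L :: "'a list"
      by simp
    fix w assume "w \<in> ?S"
    then obtain A \<alpha> \<beta> where w: "w = (A, \<alpha>, \<beta>)" "card A = p"
      "\<alpha> \<in> permutations_of_set A" "\<beta> \<in> permutations_of_set (T - A)"
      by auto
    then have "length \<alpha> = p" by (simp add: length_finite_permutations_of_set)
    then show "?split ((\<lambda>(A, \<alpha>, \<beta>). \<alpha> @ \<beta>) w) = w"
      using w(1,3) by (simp add: permutations_of_set_def)
  qed
  have "(\<Sum>L\<in>permutations_of_set T. h (take p L) (drop p L)) = (\<Sum>(A, \<alpha>, \<beta>)\<in>?S. h \<alpha> \<beta>)"
    using sum.reindex_bij_betw[OF bij, of "\<lambda>(A, \<alpha>, \<beta>). h \<alpha> \<beta>"] by simp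
  also have "\<dots> = (\<Sum>A\<in>?I. \<Sum>(\<alpha>, \<beta>)\<in>permutations_of_set A \<times> permutations_of_set (T - A). h \<alpha> \<beta>)"
    using T by (intro sum.Sigma[symmetric]) auto
  also have "\<dots> = (\<Sum>A\<in>?I. \<Sum>\<alpha>\<in>permutations_of_set A. \<Sum>\<beta>\<in>permutations_of_set (T - A). h \<alpha> \<beta>)"
    by (simp only: sum.cartesian_product)
  finally show ?thesis .
qed

lemma sum_permutations_of_set_split_mult:
  fixes f g :: "'a list \<Rightarrow> 'b :: comm_semiring_0"
  assumes "finite T" "p \<le> card T"
  shows "(\<Sum>L\<in>permutations_of_set T. f (take p L) * g (drop p L))
       = (\<Sum>A | A \<subseteq> T \<and> card A = p.
            (\<Sum>\<alpha>\<in>permutations_of_set A. f \<alpha>) * (\<Sum>\<beta>\<in>permutations_of_set (T - A). g \<beta>))"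
  using sum_permutations_of_set_split[OF assms, of "\<lambda>\<alpha> \<beta>. f \<alpha> * g \<beta>"]
  by (simp add: sum_product)

lemma sum_permutations_of_set_insert:
  assumes T: "finite T" and m: "m \<in> T"
  shows "(\<Sum>L\<in>permutations_of_set T. f L)
       = (\<Sum>L\<in>permutations_of_set (T - {m}). \<Sum>p\<in>{0..card (T - {m})}. f (take p L @ m # drop p L))"
proof -
  let ?S = "permutations_of_set (T - {m}) \<times> {0..card (T - {m})}"
  let ?ins = "\<lambda>(L, p). take p L @ m # drop p L"
  have "?ins ` ?S = permutations_of_set T"
  proof
    show "?ins ` ?S \<subseteq> permutations_of_set T"
    proof clarify
      fix L p assume "L \<in> permutations_of_set (T - {m})"
      then have "distinct (take p L @ drop p L)" "set (take p L @ drop p L) = T - {m}"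
        by (simp_all add: permutations_of_set_def)
      then show "take p L @ m # drop p L \<in> permutations_of_set T"
        using m unfolding permutations_of_set_def set_append distinct_append by auto
    qed
    show "permutations_of_set T \<subseteq> ?ins ` ?S"
    proof
      fix L assume L: "L \<in> permutations_of_set T"
      then have d: "distinct L" "set L = T" by (auto simp: permutations_of_set_def)
      then obtain xs ys where xy: "L = xs @ m # ys" using m split_list by metis
      then have "xs @ ys \<in> permutations_of_set (T - {m})"
        using d by (auto simp: permutations_of_set_def)
      moreover have "length xs \<le> card (T - {m})"
        using d xy distinct_card[of L] T m by auto
      ultimately show "L \<in> ?ins ` ?S"
        using xy by (intro image_eqI[of _ _ "(xs @ ys, length xs)"]) auto
    qed
  qed
  moreover have "card ?S = card (permutations_of_set T)"
  proof -
    have "card T = Suc (card (T - {m}))" using T m by (metis card_Suc_Diff1)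
    then show ?thesis using T by (simp add: card_cartesian_product)
  qed
  ultimately have "bij_betw ?ins ?S (permutations_of_set T)"
    by (intro bij_betw_imageI eq_card_imp_inj_on) auto
  then show ?thesis
    using sum.reindex_bij_betw[of ?ins ?S "permutations_of_set T" f]
    by (simp add: sum.cartesian_product case_prod_unfold)
qed

lemma sum_list_map_permutations_of_set:
  "L \<in> permutations_of_set A \<Longrightarrow> sum_list (map f L) = sum f A"
  by (simp add: permutations_of_set_def sum_list_distinct_conv_sum_set)

lemma sum_permutations_G_zero_sum_factor_eq_0:
  fixes x :: "'a \<Rightarrow> real"
  assumes T: "finite T" and p: "1 \<le> p" "p < card T"
    and IH: "\<And>A. A \<subseteq> T \<Longrightarrow> A \<noteq> {} \<Longrightarrow> (\<Sum>\<alpha>\<in>permutations_of_set A. G_zero_sum (map x \<alpha>)) = 0"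
  shows "(\<Sum>L\<in>permutations_of_set T. G_zero_sum (map x (take p L)) * g (drop p L)) = 0"
    and "(\<Sum>L\<in>permutations_of_set T. f (take p L) * G_zero_sum (map x (drop p L))) = 0"
proof -
  have nonempty: "A \<noteq> {}" "T - A \<noteq> {}" if "A \<subseteq> T" "card A = p" for A
    using that p T by (auto simp: card_Diff_subset finite_subset)
  note split = sum_permutations_of_set_split_mult[OF T less_imp_le[OF p(2)]]
  show "(\<Sum>L\<in>permutations_of_set T. G_zero_sum (map x (take p L)) * g (drop p L)) = 0"
    unfolding split[of "\<lambda>\<alpha>. G_zero_sum (map x \<alpha>)" g]
    by (intro sum.neutral ballI) (simp add: IH nonempty)
  show "(\<Sum>L\<in>permutations_of_set T. f (take p L) * G_zero_sum (map x (drop p L))) = 0"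
    unfolding split[of f "\<lambda>\<beta>. G_zero_sum (map x \<beta>)"]
    by (intro sum.neutral ballI) (simp add: IH[OF Diff_subset nonempty(2)])
qed

lemma sum_permutations_G_list_eq_0_step:
  fixes x :: "'a \<Rightarrow> real"
  assumes T: "finite T" and m: "m \<in> T" and nonzero: "\<forall>t\<in>T. x t \<noteq> 0" and zero: "sum x T = 0"
    and IH: "\<And>A. A \<subseteq> T - {m} \<Longrightarrow> A \<noteq> {} \<Longrightarrow>
               (\<Sum>\<alpha>\<in>permutations_of_set A. G_zero_sum (map x \<alpha>)) = 0"
  shows "(\<Sum>L\<in>permutations_of_set T. G_list (map x L)) = 0"
proof -
  define y where "y = x m"
  define T' where "T' = T - {m}"
  define k where "k = card T'"
  let ?front = "\<lambda>p L. G_zero_sum (map x (take p L)) * (y * G_list (y # map x (drop p L)))"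
  let ?back = "\<lambda>p L. y * G_list (map x (take p L) @ [y]) * G_zero_sum (map x (drop p L))"
  have y: "y \<noteq> 0" using nonzero m by (simp add: y_def)
  have T': "finite T'" using T by (simp add: T'_def)
  have sum_T': "sum x T' = - y"
    using zero sum.remove[OF T m, of x] by (simp add: T'_def y_def)
  then have "T' \<noteq> {}" using y by auto
  then have k: "1 \<le> k" using T' by (simp add: k_def Suc_le_eq card_gt_0_iff)
  have "y\<^sup>2 * (\<Sum>L\<in>permutations_of_set T. G_list (map x L))
      = (\<Sum>L\<in>permutations_of_set T'.
           y\<^sup>2 * (\<Sum>p\<in>{0..k}. G_list (take p (map x L) @ y # drop p (map x L))))"
    using sum_permutations_of_set_insert[OF T m, of "\<lambda>L. y\<^sup>2 * G_list (map x L)"]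
    by (simp add: sum_distrib_left T'_def k_def y_def take_map drop_map)
  also have "\<dots> = (\<Sum>L\<in>permutations_of_set T'. \<Sum>p\<in>{1..<k}. ?front p L - ?back p L)"
  proof (rule sum.cong[OF refl])
    fix L assume "L \<in> permutations_of_set T'"
    then have "length (map x L) = k" "sum_list (map x L) = - y"
      by (simp_all add: k_def length_finite_permutations_of_set
          sum_list_map_permutations_of_set sum_T')
    then show "y\<^sup>2 * (\<Sum>p\<in>{0..k}. G_list (take p (map x L) @ y # drop p (map x L)))
             = (\<Sum>p\<in>{1..<k}. ?front p L - ?back p L)"
      using G_list_insertion_sum[OF y, of "map x L"] k by (simp add: take_map drop_map)
  qed
  also have "\<dots> = (\<Sum>p\<in>{1..<k}. (\<Sum>L\<in>permutations_of_set T'. ?front p L)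
                                - (\<Sum>L\<in>permutations_of_set T'. ?back p L))"
    by (subst sum.swap) (simp add: sum_subtractf)
  also have "\<dots> = 0"
  proof (rule sum.neutral, rule ballI)
    fix p assume "p \<in> {1..<k}"
    then have "1 \<le> p" "p < card T'" by (auto simp: k_def)
    note vanish = sum_permutations_G_zero_sum_factor_eq_0[OF T' this IH[folded T'_def]]
    from vanish(1)[of "\<lambda>\<beta>. y * G_list (y # map x \<beta>)"] vanish(2)[of "\<lambda>\<alpha>. y * G_list (map x \<alpha> @ [y])"]
    show "(\<Sum>L\<in>permutations_of_set T'. ?front p L) - (\<Sum>L\<in>permutations_of_set T'. ?back p L) = 0"
      by (simp add: mult.assoc)
  qed
  finally show ?thesis using y by simp
qed

lemma sum_permutations_G_zero_sum_eq_0: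
  fixes x :: "'a \<Rightarrow> real"
  assumes "finite T" "T \<noteq> {}" "\<forall>t\<in>T. x t \<noteq> 0"
  shows "(\<Sum>L\<in>permutations_of_set T. G_zero_sum (map x L)) = 0"
  using assms
proof (induction "card T" arbitrary: T rule: less_induct)
  case less
  show ?case
  proof (cases "sum x T = 0")
    case True
    obtain m where m: "m \<in> T" using less.prems by auto
    have "(\<Sum>L\<in>permutations_of_set T. G_list (map x L)) = 0"
    proof (rule sum_permutations_G_list_eq_0_step[OF _ m _ True])
      show "(\<Sum>\<alpha>\<in>permutations_of_set A. G_zero_sum (map x \<alpha>)) = 0" if "A \<subseteq> T - {m}" "A \<noteq> {}" for A
        using that m less by (intro less.hyps) (auto intro: psubset_card_mono finite_subset)
    qed (use less.prems in auto)
    then show ?thesis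
      using True by (simp add: G_zero_sum_def sum_list_map_permutations_of_set cong: sum.cong)
  next
    case False
    then show ?thesis by (simp add: G_zero_sum_def sum_list_map_permutations_of_set)
  qed
qed

lemma bij_betw_permutes_permutations_of_set:
  assumes "distinct xs"
  shows "bij_betw (\<lambda>\<sigma>. map \<sigma> xs) {\<sigma>. \<sigma> permutes set xs} (permutations_of_set (set xs))"
proof -
  have xs: "xs \<in> permutations_of_set (set xs)" using assms by auto
  have inj: "inj_on (\<lambda>\<sigma>. map \<sigma> xs) {\<sigma>. \<sigma> permutes set xs}"
  proof (rule inj_onI, rule ext)
    fix \<sigma> \<tau> i assume "\<sigma> \<in> {\<sigma>. \<sigma> permutes set xs}" "\<tau> \<in> {\<sigma>. \<sigma> permutes set xs}" "map \<sigma> xs = map \<tau> xs"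
    then show "\<sigma> i = \<tau> i" by (cases "i \<in> set xs") (auto simp: permutes_not_in)
  qed
  have "(\<lambda>\<sigma>. map \<sigma> xs) ` {\<sigma>. \<sigma> permutes set xs} \<subseteq> permutations_of_set (set xs)"
    using permutations_of_set_image_permutes xs by blast
  moreover have "card ((\<lambda>\<sigma>. map \<sigma> xs) ` {\<sigma>. \<sigma> permutes set xs}) = card (permutations_of_set (set xs))"
    using inj by (simp add: card_image card_permutations)
  ultimately show ?thesis
    using inj by (intro bij_betw_imageI card_subset_eq) auto
qed

lemma G_eq_G_list: "G n y = G_list (map y [1..<Suc n])"
proof -
  have "partial_sum y i = sum_list (take i (map y [1..<Suc n]))" if "i \<le> n" for i
    using that by (simp add: partial_sum_def take_map min_def sum_set_upt_conv_sum_list_nat[symmetric]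
        atLeastLessThanSuc_atLeastAtMost del: upt_Suc)
  then show ?thesis
    unfolding G_def G_list_def by (intro prod.cong) auto
qed

lemma G_eq_0_if_not_allowed: "\<not> allowed n y \<Longrightarrow> G n y = 0"
  unfolding allowed_def G_def by auto

theorem lemmaC4:
  fixes n :: nat and x :: "nat \<Rightarrow> real"
  assumes "n \<ge> 2"
    and "\<forall>i\<in>{1..n}. x i \<noteq> 0"
    and "(\<Sum>i=1..n. x i) = 0"
  shows "(\<Sum>\<sigma> \<in> {\<sigma>. \<sigma> permutes {1..n} \<and> allowed n (perm_vec \<sigma> x)}. G n (perm_vec \<sigma> x)) = 0"
proof -
  have "(\<Sum>\<sigma> \<in> {\<sigma>. \<sigma> permutes {1..n} \<and> allowed n (perm_vec \<sigma> x)}. G n (perm_vec \<sigma> x))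
      = (\<Sum>\<sigma> | \<sigma> permutes {1..n}. G n (perm_vec \<sigma> x))"
    by (rule sum.mono_neutral_left) (auto simp: finite_permutations G_eq_0_if_not_allowed)
  also have "\<dots> = (\<Sum>\<sigma> | \<sigma> permutes {1..n}. G_list (map x (map \<sigma> [1..<Suc n])))"
    by (simp add: G_eq_G_list perm_vec_def comp_def)
  also have "\<dots> = (\<Sum>L\<in>permutations_of_set {1..n}. G_list (map x L))"
    using sum.reindex_bij_betw[OF bij_betw_permutes_permutations_of_set[of "[1..<Suc n]"],
        of "\<lambda>L. G_list (map x L)"]
    by (simp add: atLeastLessThanSuc_atLeastAtMost del: upt_Suc)
  also have "\<dots> = (\<Sum>L\<in>permutations_of_set {1..n}. G_zero_sum (map x L))"
    using assms(3) by (intro sum.cong) (simp_all add: G_zero_sum_def sum_list_map_permutations_of_set)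
  also have "\<dots> = 0"
    using assms(1,2) by (intro sum_permutations_G_zero_sum_eq_0) auto
  finally show ?thesis .
qed

end
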